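(* Let $R>0$, $X=\{x\in\mathbb{R}^n:\|x\|_\infty\le R\}$ and $\mathcal{X}=X^m\subset\mathbb{R}^{m\times n}$ (the $m\times n$ matrices all of whose rows lie in $X$, equivalently all of whose entries lie in $[-R,R]$), and let $\Pi_{\mathcal{X}}$ be the Euclidean projection onto $\mathcal{X}$. Let $J=\frac1m\mathbf{1}\mathbf{1}^\top\in\mathbb{R}^{m\times m}$. Then for every $x\in\mathbb{R}^{m\times n}$, \[ \|(I-J)\Pi_{\mathcal{X}}(x)\|\leq\|(I-J)x\|, \] where $\|\cdot\|$ is the Frobenius norm. *)

theory Defs
  imports "HOL-Analysis.Analysis"
begin

text \<open>m x n real matrices are represented as real^'n^'m (rows indexed by 'm).
  The norm on this type is the Euclidean norm of all entries, i.e. the Frobenius norm.\<close>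

definition box_set :: "real \<Rightarrow> (real^'n^'m) set" where
  "box_set R = {A. \<forall>i j. \<bar>A $ i $ j\<bar> \<le> R}"

definition avg_mat :: "real^'m^'m" where
  "avg_mat = (\<chi> i j. 1 / real CARD('m))"

end

theory Submission
  imports Defs
begin

text \<open>Projection onto the box clips every entry to \<open>[-R, R]\<close>, a 1-Lipschitz map of the reals.
  The squared Frobenius norm of \<open>(I - J) x\<close> is, column by column, the empirical variance of
  the column, which equals \<open>1/(2m)\<close> times the sum of all squared pairwise differences of its
  entries. Clipping shrinks every pairwise difference, hence it shrinks this quantity.\<close>

definition clip :: "real \<Rightarrow> real \<Rightarrow> real" where
  "clip R t = max (-R) (min R t)"

lemma abs_clip_le: "R \<ge> 0 \<Longrightarrow> \<bar>clip R t\<bar> \<le> R"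
  unfolding clip_def by linarith

lemma clip_dist_le: "\<bar>clip R a - clip R b\<bar> \<le> \<bar>a - b\<bar>"
  unfolding clip_def by auto

lemma clip_closest: "\<bar>z\<bar> \<le> R \<Longrightarrow> \<bar>a - clip R a\<bar> \<le> \<bar>a - z\<bar>"
  unfolding clip_def by (simp add: abs_le_iff) linarith

lemma norm_power2_matrix: "(norm (A :: real^'n^'m))\<^sup>2 = (\<Sum>i\<in>UNIV. \<Sum>j\<in>UNIV. (A$i$j)\<^sup>2)"
proof -
  have "(norm (A$i))\<^sup>2 = (\<Sum>j\<in>UNIV. (A$i$j)\<^sup>2)" for i
    unfolding norm_vec_def L2_set_def by (simp add: sum_nonneg)
  then show ?thesis
    unfolding norm_vec_def[of A] L2_set_def by (simp add: sum_nonneg)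
qed

lemma convex_box_set: "convex (box_set R)"
  unfolding convex_def box_set_def
proof clarsimp
  fix x y :: "real^'n^'m" and u v :: real and i j
  assume h: "\<forall>i j. \<bar>x $ i $ j\<bar> \<le> R" "\<forall>i j. \<bar>y $ i $ j\<bar> \<le> R" "0 \<le> u" "0 \<le> v" "u + v = 1"
  have "\<bar>u * x$i$j + v * y$i$j\<bar> \<le> u * \<bar>x$i$j\<bar> + v * \<bar>y$i$j\<bar>"
    using h by (simp add: abs_triangle_ineq[THEN order_trans] abs_mult)
  also have "\<dots> \<le> u * R + v * R"
    using h by (intro add_mono mult_left_mono) auto
  finally show "\<bar>u * x$i$j + v * y$i$j\<bar> \<le> R"
    using h by (simp add: distrib_right[symmetric])
qed

lemma closed_box_set: "closed (box_set R :: (real^'n^'m) set)"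
proof -
  have "box_set R = (\<Inter>i. \<Inter>j. {A :: real^'n^'m. \<bar>A$i$j\<bar> \<le> R})"
    unfolding box_set_def by auto
  moreover have "closed {A :: real^'n^'m. \<bar>A$i$j\<bar> \<le> R}" for i j
    by (intro closed_Collect_le continuous_intros)
  ultimately show ?thesis by (simp add: closed_INT)
qed

lemma closest_point_box_set:
  fixes x :: "real^'n^'m"
  assumes "R \<ge> 0"
  shows "closest_point (box_set R) x = (\<chi> i j. clip R (x$i$j))"
proof (rule closest_point_unique[symmetric, OF convex_box_set closed_box_set])
  show "(\<chi> i j. clip R (x$i$j)) \<in> box_set R"
    unfolding box_set_def using abs_clip_le[OF assms] by simp
  show "\<forall>z\<in>box_set R. dist x (\<chi> i j. clip R (x$i$j)) \<le> dist x z"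
  proof
    fix z :: "real^'n^'m" assume "z \<in> box_set R"
    then have "\<bar>z$i$j\<bar> \<le> R" for i j unfolding box_set_def by blast
    then have "(\<Sum>i\<in>UNIV. \<Sum>j\<in>UNIV. (x$i$j - clip R (x$i$j))\<^sup>2)
             \<le> (\<Sum>i\<in>UNIV. \<Sum>j\<in>UNIV. (x$i$j - z$i$j)\<^sup>2)"
      by (intro sum_mono) (simp add: abs_le_square_iff[symmetric] clip_closest)
    then have "(dist x (\<chi> i j. clip R (x$i$j)))\<^sup>2 \<le> (dist x z)\<^sup>2"
      unfolding dist_norm norm_power2_matrix by simp
    then show "dist x (\<chi> i j. clip R (x$i$j)) \<le> dist x z"
      by (rule power2_le_imp_le) simp
  qed
qed

lemma sum_power2_deviation_mean:
  fixes f :: "'a \<Rightarrow> real"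
  assumes "finite A" "A \<noteq> {}"
  shows "(\<Sum>i\<in>A. (f i - (\<Sum>k\<in>A. f k) / real (card A))\<^sup>2)
       = (\<Sum>i\<in>A. \<Sum>k\<in>A. (f i - f k)\<^sup>2) / (2 * real (card A))"
proof -
  define m where "m = real (card A)"
  define S where "S = (\<Sum>k\<in>A. f k)"
  define Q where "Q = (\<Sum>k\<in>A. (f k)\<^sup>2)"
  have m: "m > 0" unfolding m_def using assms by (simp add: card_gt_0_iff)
  have "(\<Sum>i\<in>A. (f i - S / m)\<^sup>2) = (\<Sum>i\<in>A. (f i)\<^sup>2 - 2 * (S/m) * f i + (S/m)\<^sup>2)"
    by (simp add: power2_diff algebra_simps)
  also have "\<dots> = Q - 2 * (S/m) * S + m * (S/m)\<^sup>2"
    by (simp add: sum.distrib sum_subtractf sum_distrib_left[symmetric] sum_divide_distrib[symmetric]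
        Q_def S_def m_def)
  also have "\<dots> = Q - S\<^sup>2 / m"
    using m by (simp add: field_simps power2_eq_square)
  finally have deviation: "(\<Sum>i\<in>A. (f i - S / m)\<^sup>2) = Q - S\<^sup>2 / m" .
  have "(\<Sum>i\<in>A. \<Sum>k\<in>A. (f i - f k)\<^sup>2) = (\<Sum>i\<in>A. m * (f i)\<^sup>2 - 2 * f i * S + Q)"
    unfolding power2_diff Q_def S_def m_def
    by (simp add: sum.distrib sum_subtractf sum_distrib_left sum_distrib_right)
  also have "\<dots> = m * Q - (\<Sum>i\<in>A. f i) * (2 * S) + m * Q"
    by (simp add: sum.distrib sum_subtractf sum_distrib_left[symmetric]
        sum_distrib_right[symmetric] Q_def m_def mult.assoc mult.left_commute[of 2])
  also have "\<dots> = 2 * m * Q - 2 * S\<^sup>2"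
    by (simp add: S_def[symmetric] power2_eq_square)
  finally have pairwise: "(\<Sum>i\<in>A. \<Sum>k\<in>A. (f i - f k)\<^sup>2) = 2 * m * Q - 2 * S\<^sup>2" .
  show ?thesis
    unfolding S_def[symmetric] m_def[symmetric] deviation pairwise
    using m by (simp add: field_simps power2_eq_square)
qed

lemma centering_mult_nth:
  "((mat 1 - (avg_mat :: real^'m^'m)) ** (y :: real^'n^'m)) $ i $ j
     = y$i$j - (\<Sum>k\<in>UNIV. y$k$j) / real CARD('m)"
  by (simp add: matrix_matrix_mult_def avg_mat_def mat_def left_diff_distrib sum_subtractf
      if_distrib[of "\<lambda>a. a * b" for b] sum_divide_distrib cong: if_cong)

lemma norm_power2_centering_mult:
  "(norm ((mat 1 - (avg_mat :: real^'m^'m)) ** (y :: real^'n^'m)))\<^sup>2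
     = (\<Sum>j\<in>UNIV. (\<Sum>i\<in>UNIV. \<Sum>k\<in>UNIV. (y$i$j - y$k$j)\<^sup>2) / (2 * real CARD('m)))"
  unfolding norm_power2_matrix centering_mult_nth
  by (subst sum.swap) (simp add: sum_power2_deviation_mean)

lemma norm_centering_mult_mono:
  fixes x y :: "real^'n^'m"
  assumes "\<And>i k j. \<bar>y$i$j - y$k$j\<bar> \<le> \<bar>x$i$j - x$k$j\<bar>"
  shows "norm ((mat 1 - (avg_mat :: real^'m^'m)) ** y) \<le> norm ((mat 1 - (avg_mat :: real^'m^'m)) ** x)"
proof (rule power2_le_imp_le)
  show "(norm ((mat 1 - (avg_mat :: real^'m^'m)) ** y))\<^sup>2 \<le> (norm ((mat 1 - avg_mat) ** x))\<^sup>2"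
    unfolding norm_power2_centering_mult
    using assms by (intro sum_mono divide_right_mono) (simp_all add: abs_le_square_iff)
qed simp

theorem lemma3p1:
  fixes R :: real and x :: "real^'n^'m"
  assumes "R > 0"
  shows "norm ((mat 1 - (avg_mat :: real^'m^'m)) ** closest_point (box_set R) x)
         \<le> norm ((mat 1 - (avg_mat :: real^'m^'m)) ** x)"
  unfolding closest_point_box_set[OF less_imp_le[OF assms]]
  by (rule norm_centering_mult_mono) (simp add: clip_dist_le)

end
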